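(* Let $p$ be an odd prime and let $O_2^+(\mathbb{F}_p)\subset GL_2(\mathbb{F}_p)$ be the group generated by $\xi=\begin{pmatrix}0&1\\1&0\end{pmatrix}$ and $\operatorname{diag}(c,c^{-1})$, $c\in\mathbb{F}_p^\times$ (the orthogonal group of the quadratic form $x_1x_2$, of order $2(p-1)$). It acts on $\mathbb{F}_p[x_1,x_2,y_1,y_2]$ by: $\xi$ swaps $x_1\leftrightarrow x_2$ and $y_1\leftrightarrow y_2$; $\operatorname{diag}(c,c^{-1})$ sends $x_1\mapsto cx_1,\ x_2\mapsto c^{-1}x_2,\ y_1\mapsto c^{-1}y_1,\ y_2\mapsto cy_2$. Then the invariant ring $\mathbb{F}_p[x_1,x_2,y_1,y_2]^{O_2^+(\mathbb{F}_p)}$ is generated as an $\mathbb{F}_p$-algebra by $$\{x_1x_2,\ y_1y_2,\ x_1y_1+x_2y_2,\ x_1^{p-1-i}y_2^i+x_2^{p-1-i}y_1^i \mid 0\le i\le p-1\}.$$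
   Context: This is the natural action on $\mathbb{F}_p[V\oplus V^*]$, $V=\mathbb{F}_p^2$: $x_1,x_2$ transform by $(x_1,x_2)^T\mapsto g(x_1,x_2)^T$ and $y_1,y_2$ by $(y_1,y_2)^T\mapsto (g^T)^{-1}(y_1,y_2)^T$, extended to $\mathbb{F}_p$-algebra automorphisms. *)

theory Defs
  imports "HOL-Library.Poly_Mapping" "HOL-Library.Cardinality" "HOL-Computational_Algebra.Primes"
begin

datatype var = X1 | X2 | Y1 | Y2

text \<open>Polynomials in x1,x2,y1,y2 over 'k: finitely supported maps from monomials
  (exponent vectors) to coefficients, with the convolution product of Poly_Mapping.\<close>
type_synonym 'k mpoly4 = "(var \<Rightarrow>\<^sub>0 nat) \<Rightarrow>\<^sub>0 'k"

definition Const :: "'k::comm_ring_1 \<Rightarrow> 'k mpoly4" where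
  "Const c = Poly_Mapping.single 0 c"

definition Var :: "var \<Rightarrow> 'k::comm_ring_1 mpoly4" where
  "Var v = Poly_Mapping.single (Poly_Mapping.single v 1) 1"

definition subst :: "(var \<Rightarrow> 'k::comm_ring_1 mpoly4) \<Rightarrow> 'k mpoly4 \<Rightarrow> 'k mpoly4" where
  "subst s P = (\<Sum>mon\<in>Poly_Mapping.keys P. Const (Poly_Mapping.lookup P mon) * (\<Prod>v\<in>Poly_Mapping.keys (mon :: var \<Rightarrow>\<^sub>0 nat). s v ^ Poly_Mapping.lookup mon v))"

text \<open>2x2 matrices (a,b,c,d) = [[a,b],[c,d]].\<close>
type_synonym 'k mat2 = "'k \<times> 'k \<times> 'k \<times> 'k"

fun m2mult :: "'k::comm_ring_1 mat2 \<Rightarrow> 'k mat2 \<Rightarrow> 'k mat2" where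
  "m2mult (a,b,c,d) (e,f,g,h) = (a*e+b*g, a*f+b*h, c*e+d*g, c*f+d*h)"

fun m2det :: "'k::comm_ring_1 mat2 \<Rightarrow> 'k" where
  "m2det (a,b,c,d) = a*d - b*c"

fun m2inv :: "'k::field mat2 \<Rightarrow> 'k mat2" where
  "m2inv (a,b,c,d) = (let D = a*d - b*c in (d/D, -b/D, -c/D, a/D))"

definition m2id :: "'k::comm_ring_1 mat2" where
  "m2id = (1,0,0,1)"

text \<open>Natural action of g on F[V + V*]: (x1,x2)^T \<mapsto> g (x1,x2)^T and
  (y1,y2)^T \<mapsto> (g^T)^{-1} (y1,y2)^T, extended to algebra automorphisms.\<close>
fun act_subst :: "'k::field mat2 \<Rightarrow> var \<Rightarrow> 'k mpoly4" where
  "act_subst (a,b,c,d) X1 = Const a * Var X1 + Const b * Var X2"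
| "act_subst (a,b,c,d) X2 = Const c * Var X1 + Const d * Var X2"
| "act_subst (a,b,c,d) Y1 = Const (d / (a*d-b*c)) * Var Y1 + Const (- c / (a*d-b*c)) * Var Y2"
| "act_subst (a,b,c,d) Y2 = Const (- b / (a*d-b*c)) * Var Y1 + Const (a / (a*d-b*c)) * Var Y2"

definition act :: "'k::field mat2 \<Rightarrow> 'k mpoly4 \<Rightarrow> 'k mpoly4" where
  "act g P = subst (act_subst g) P"

definition O2_gens :: "'k::field mat2 set" where
  "O2_gens = {(0,1,1,0)} \<union> {(c,0,0,inverse c) | c. c \<noteq> 0}"

inductive_set gen_group :: "'k::field mat2 set \<Rightarrow> 'k mat2 set" for S where
  gg_id: "m2id \<in> gen_group S"
| gg_mult: "s \<in> S \<Longrightarrow> g \<in> gen_group S \<Longrightarrow> m2mult s g \<in> gen_group S"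
| gg_inv: "s \<in> S \<Longrightarrow> g \<in> gen_group S \<Longrightarrow> m2mult (m2inv s) g \<in> gen_group S"

definition O2plus :: "'k::field mat2 set" where
  "O2plus = gen_group O2_gens"

inductive_set gen_alg :: "'k::comm_ring_1 mpoly4 set \<Rightarrow> 'k mpoly4 set" for G where
  ga_const: "Const c \<in> gen_alg G"
| ga_gen: "f \<in> G \<Longrightarrow> f \<in> gen_alg G"
| ga_add: "f \<in> gen_alg G \<Longrightarrow> h \<in> gen_alg G \<Longrightarrow> f + h \<in> gen_alg G"
| ga_mult: "f \<in> gen_alg G \<Longrightarrow> h \<in> gen_alg G \<Longrightarrow> f * h \<in> gen_alg G"

end

theory Submission
  imports Defs "HOL-Computational_Algebra.Polynomial" "HOL-Number_Theory.Cong"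
begin

text \<open>Every element of \<open>O\<^sub>2\<^sup>+\<close> is \<open>diag(t, t\<inverse>)\<close> or \<open>antidiag(t, t\<inverse>)\<close>.
  The torus element \<open>diag(t, t\<inverse>)\<close> scales \<open>x\<^sub>1\<^sup>a x\<^sub>2\<^sup>b y\<^sub>1\<^sup>c y\<^sub>2\<^sup>d\<close> by
  \<open>t\<^sup>a\<^sup>-\<^sup>b\<^sup>-\<^sup>c\<^sup>+\<^sup>d\<close>, and \<open>t\<^sup>e = 1\<close> for all units \<open>t\<close> exactly when \<open>p - 1\<close> divides \<open>e\<close>.
  So an invariant \<open>P\<close> only involves monomials of weight \<open>a - b - c + d\<close> divisible by \<open>p - 1\<close>,
  and \<open>\<xi>\<close>-invariance writes \<open>2P\<close> as a combination of the symmetrisations \<open>m + \<xi>m\<close> of such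
  monomials. These lie in the subalgebra by induction on the degree: factors \<open>x\<^sub>1x\<^sub>2\<close> and
  \<open>y\<^sub>1y\<^sub>2\<close> split off, and the remaining shapes \<open>x\<^sub>1\<^sup>a y\<^sub>2\<^sup>d\<close> and \<open>x\<^sub>1\<^sup>a y\<^sub>1\<^sup>c\<close>
  are reduced with the product rule \<open>(m + \<xi>m)(n + \<xi>n) = (mn + \<xi>(mn)) + (m\<xi>n + \<xi>(m\<xi>n))\<close>.\<close>

section \<open>Substitution is an algebra homomorphism\<close>

lemma poly_mapping_sum_single: "(\<Sum>m\<in>Poly_Mapping.keys P. Poly_Mapping.single m (Poly_Mapping.lookup P m)) = P"
  by (rule poly_mapping_eqI) (simp add: lookup_sum lookup_single when_def in_keys_iff)

lemma Const_0 [simp]: "Const 0 = 0"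
  by (simp add: Const_def)

lemma Const_1 [simp]: "Const 1 = 1"
  by (simp add: Const_def)

lemma Const_add: "Const (a + b) = Const a + Const b"
  by (simp add: Const_def single_add)

lemma Const_mult: "Const (a * b) = Const a * Const b"
  by (simp add: Const_def mult_single)

lemma Const_power: "Const (a ^ n) = Const a ^ n"
  by (induct n) (simp_all add: Const_mult)

lemma Const_mult_single: "Const a * Poly_Mapping.single m b = Poly_Mapping.single m (a * b)"
  by (simp add: Const_def mult_single)

lemma Const_numeral: "Const (numeral n) = numeral n"
  by (simp add: Const_def)

definition subst_monom :: "(var \<Rightarrow> 'k::comm_ring_1 mpoly4) \<Rightarrow> (var \<Rightarrow>\<^sub>0 nat) \<Rightarrow> 'k mpoly4" where
  "subst_monom s m = (\<Prod>v\<in>Poly_Mapping.keys m. s v ^ Poly_Mapping.lookup m v)"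

lemma subst_monom_eq:
  "subst_monom s m = s X1 ^ Poly_Mapping.lookup m X1 * s X2 ^ Poly_Mapping.lookup m X2 * s Y1 ^ Poly_Mapping.lookup m Y1 * s Y2 ^ Poly_Mapping.lookup m Y2"
proof -
  have "subst_monom s m = (\<Prod>v\<in>{X1, X2, Y1, Y2}. s v ^ Poly_Mapping.lookup m v)"
    unfolding subst_monom_def
    by (rule prod.mono_neutral_left) (auto simp: in_keys_iff intro: var.exhaust)
  then show ?thesis
    by (simp add: mult.assoc)
qed

lemma subst_monom_add: "subst_monom s (m + n) = subst_monom s m * subst_monom s n"
  by (simp add: subst_monom_eq lookup_add power_add algebra_simps)

lemma subst_eq_sum_superset:
  assumes "finite F" "Poly_Mapping.keys P \<subseteq> F"
  shows "subst s P = (\<Sum>m\<in>F. Const (Poly_Mapping.lookup P m) * subst_monom s m)"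
  unfolding subst_def subst_monom_def[symmetric]
  by (rule sum.mono_neutral_left) (use assms in \<open>auto simp: in_keys_iff\<close>)

lemma subst_add: "subst s (P + Q) = subst s P + subst s Q"
proof -
  let ?F = "Poly_Mapping.keys P \<union> Poly_Mapping.keys Q"
  have "subst s (P + Q) = (\<Sum>m\<in>?F. Const (Poly_Mapping.lookup (P + Q) m) * subst_monom s m)"
    by (rule subst_eq_sum_superset) (simp_all add: keys_add)
  also have "\<dots> = subst s P + subst s Q"
    by (simp add: subst_eq_sum_superset[of ?F] lookup_add Const_add distrib_right sum.distrib)
  finally show ?thesis .
qed

lemma subst_zero: "subst s 0 = 0"
  by (simp add: subst_def)

lemma subst_sum: "subst s (\<Sum>i\<in>I. f i) = (\<Sum>i\<in>I. subst s (f i))"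
  by (induct I rule: infinite_finite_induct) (simp_all add: subst_zero subst_add)

lemma subst_single: "subst s (Poly_Mapping.single m a) = Const a * subst_monom s m"
  by (cases "a = 0") (simp_all add: subst_def subst_monom_def)

lemma subst_mult: "subst s (P * Q) = subst s P * subst s Q"
proof -
  have "P * Q = (\<Sum>m\<in>Poly_Mapping.keys P. \<Sum>n\<in>Poly_Mapping.keys Q. Poly_Mapping.single (m + n) (Poly_Mapping.lookup P m * Poly_Mapping.lookup Q n))"
    by (subst (1 2) poly_mapping_sum_single[symmetric])
      (simp add: sum_distrib_left sum_distrib_right mult_single sum.swap[of _ "Poly_Mapping.keys Q"])
  then have "subst s (P * Q) =
      (\<Sum>m\<in>Poly_Mapping.keys P. \<Sum>n\<in>Poly_Mapping.keys Q. Const (Poly_Mapping.lookup P m) * subst_monom s m * (Const (Poly_Mapping.lookup Q n) * subst_monom s n))"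
    by (simp add: subst_sum subst_single subst_monom_add Const_mult ac_simps)
  also have "\<dots> = subst s P * subst s Q"
    by (simp add: subst_def subst_monom_def[symmetric] sum_distrib_left sum_distrib_right; rule sum.swap)
  finally show ?thesis .
qed

lemma subst_Const: "subst s (Const c) = Const c"
  by (simp add: Const_def subst_single subst_monom_def)

lemma subst_Var: "subst s (Var v) = s v"
  by (simp add: Var_def subst_single subst_monom_def)

lemma subst_power: "subst s (P ^ n) = subst s P ^ n"
  by (induct n) (simp_all add: subst_mult subst_Const[of s 1, simplified])

lemma Var_power: "Var v ^ k = Poly_Mapping.single (Poly_Mapping.single v k) 1"
  by (induct k) (simp_all add: Var_def mult_single flip: single_add)

definition monomial4 :: "nat \<Rightarrow> nat \<Rightarrow> nat \<Rightarrow> nat \<Rightarrow> 'k::comm_ring_1 mpoly4" where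
  "monomial4 a b c d = Var X1 ^ a * Var X2 ^ b * Var Y1 ^ c * Var Y2 ^ d"

definition symm_monomial :: "nat \<Rightarrow> nat \<Rightarrow> nat \<Rightarrow> nat \<Rightarrow> 'k::comm_ring_1 mpoly4" where
  "symm_monomial a b c d = monomial4 a b c d + monomial4 b a d c"

definition torus_weight :: "nat \<Rightarrow> nat \<Rightarrow> nat \<Rightarrow> nat \<Rightarrow> int" where
  "torus_weight a b c d = int a - int b - int c + int d"

lemma single_eq_monomial4:
  "Poly_Mapping.single m 1 = monomial4 (Poly_Mapping.lookup m X1) (Poly_Mapping.lookup m X2)
     (Poly_Mapping.lookup m Y1) (Poly_Mapping.lookup m Y2)"
proof -
  have "m = Poly_Mapping.single X1 (Poly_Mapping.lookup m X1) + Poly_Mapping.single X2 (Poly_Mapping.lookup m X2)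
      + Poly_Mapping.single Y1 (Poly_Mapping.lookup m Y1) + Poly_Mapping.single Y2 (Poly_Mapping.lookup m Y2)"
    by (rule poly_mapping_eqI, case_tac k) (simp_all add: lookup_add lookup_single)
  then show ?thesis
    by (simp add: monomial4_def Var_power mult_single)
qed

lemma mpoly4_expansion:
  "P = (\<Sum>m\<in>Poly_Mapping.keys P. Const (Poly_Mapping.lookup P m) *
     monomial4 (Poly_Mapping.lookup m X1) (Poly_Mapping.lookup m X2)
       (Poly_Mapping.lookup m Y1) (Poly_Mapping.lookup m Y2))"
  by (simp add: Const_mult_single flip: single_eq_monomial4) (rule poly_mapping_sum_single[symmetric])

lemma monomial4_add:
  "monomial4 (a + a') (b + b') (c + c') (d + d') = monomial4 a b c d * monomial4 a' b' c' d'"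
  by (simp add: monomial4_def power_add ac_simps)

lemma symm_monomial_mult:
  "symm_monomial a b c d * symm_monomial a' b' c' d' =
     symm_monomial (a + a') (b + b') (c + c') (d + d') + symm_monomial (a + b') (b + a') (c + d') (d + c')"
  unfolding symm_monomial_def monomial4_add by (simp add: algebra_simps)

lemma symm_monomial_swap: "symm_monomial b a d c = symm_monomial a b c d"
  by (simp add: symm_monomial_def add.commute)

lemma torus_weight_swap: "torus_weight b a d c = - torus_weight a b c d"
  by (simp add: torus_weight_def)

lemma symm_monomial_Suc_X:
  "symm_monomial (Suc a) (Suc b) c d = Var X1 * Var X2 * symm_monomial a b c d"
  by (simp add: symm_monomial_def monomial4_def algebra_simps)

lemma symm_monomial_Suc_Y:
  "symm_monomial a b (Suc c) (Suc d) = Var Y1 * Var Y2 * symm_monomial a b c d"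
  by (simp add: symm_monomial_def monomial4_def algebra_simps)

lemma torus_weight_Suc_X [simp]: "torus_weight (Suc a) (Suc b) c d = torus_weight a b c d"
  by (simp add: torus_weight_def)

lemma torus_weight_Suc_Y [simp]: "torus_weight a b (Suc c) (Suc d) = torus_weight a b c d"
  by (simp add: torus_weight_def)

lemma symm_monomial_0: "symm_monomial 0 0 0 0 = Const 2"
  by (simp add: symm_monomial_def monomial4_def Const_numeral)

section \<open>Generating the symmetrised monomials of weight divisible by \<open>q\<close>\<close>

lemma gen_alg_diff: "f \<in> gen_alg G \<Longrightarrow> h \<in> gen_alg G \<Longrightarrow> f - h \<in> gen_alg G"
proof -
  assume "f \<in> gen_alg G" "h \<in> gen_alg G"
  then have "f + Const (- 1) * h \<in> gen_alg G"
    by (intro ga_add ga_mult ga_const)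
  then show ?thesis
    by (simp add: Const_def single_uminus)
qed

lemma gen_alg_sum: "(\<And>i. i \<in> I \<Longrightarrow> f i \<in> gen_alg G) \<Longrightarrow> (\<Sum>i\<in>I. f i) \<in> gen_alg G"
  by (induct I rule: infinite_finite_induct) (auto intro: ga_add ga_const[of 0, simplified])

context
  fixes G :: "'k::comm_ring_1 mpoly4 set" and q :: nat
  assumes q_ge_2: "2 \<le> q"
    and x1x2_in: "Var X1 * Var X2 \<in> G"
    and y1y2_in: "Var Y1 * Var Y2 \<in> G"
    and pairing_in: "symm_monomial 1 0 1 0 \<in> G"
    and symm_q_in: "\<And>a d. a + d = q \<Longrightarrow> symm_monomial a 0 0 d \<in> G"
begin

lemma symm_monomial_in_gen_alg_if_reducible:
  assumes IH: "\<And>a' b' c' d'. a' + b' + c' + d' < n \<Longrightarrow> int q dvd torus_weight a' b' c' d' \<Longrightarrow>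
      symm_monomial a' b' c' d' \<in> gen_alg G"
    and "a + b + c + d \<le> n" and "int q dvd torus_weight a b c d"
    and "1 \<le> a \<and> 1 \<le> b \<or> 1 \<le> c \<and> 1 \<le> d"
  shows "symm_monomial a b c d \<in> gen_alg G"
  using assms(4)
proof
  assume "1 \<le> a \<and> 1 \<le> b"
  then obtain a' b' where ab: "a = Suc a'" "b = Suc b'"
    by (metis Suc_le_D One_nat_def)
  have "symm_monomial a' b' c d \<in> gen_alg G"
    using assms(2,3) by (intro IH) (simp_all add: ab)
  then show ?thesis
    unfolding ab symm_monomial_Suc_X by (rule ga_mult[OF ga_gen[OF x1x2_in]])
next
  assume "1 \<le> c \<and> 1 \<le> d"
  then obtain c' d' where cd: "c = Suc c'" "d = Suc d'"
    by (metis Suc_le_D One_nat_def)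
  have "symm_monomial a b c' d' \<in> gen_alg G"
    using assms(2,3) by (intro IH) (simp_all add: cd)
  then show ?thesis
    unfolding cd symm_monomial_Suc_Y by (rule ga_mult[OF ga_gen[OF y1y2_in]])
qed

text \<open>For \<open>a + d = k q\<close> with \<open>k \<ge> 2\<close>, split off a generator \<open>symm_monomial a\<^sub>1 0 0 d\<^sub>1\<close>:
  the product rule leaves the reducible cross term \<open>symm_monomial a\<^sub>1 a\<^sub>2 d\<^sub>2 d\<^sub>1\<close>.\<close>
lemma symm_monomial_x1_y2_in_gen_alg:
  assumes IH: "\<And>a' b' c' d'. a' + b' + c' + d' < n \<Longrightarrow> int q dvd torus_weight a' b' c' d' \<Longrightarrow>
      symm_monomial a' b' c' d' \<in> gen_alg G"
    and deg: "a + d \<le> n" and q_dvd: "int q dvd torus_weight a 0 0 d"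
  shows "symm_monomial a 0 0 d \<in> gen_alg G"
proof -
  obtain k where k: "a + d = q * k"
    using q_dvd by (auto simp: torus_weight_def simp flip: of_nat_add)
  consider "k = 0" | "k = 1" | "2 \<le> k"
    by linarith
  then show ?thesis
  proof cases
    case 1
    then show ?thesis
      using k symm_monomial_0 ga_const by (metis add_is_0 mult_0_right)
  next
    case 2
    then show ?thesis
      using k by (intro ga_gen symm_q_in) simp
  next
    case 3
    then have "2 * q \<le> a + d"
      using k by (metis mult.commute mult_le_mono1)
    then obtain a1 d1 where split: "a1 + d1 = q" "a1 \<le> a" "d1 \<le> d"
      and cross: "1 \<le> a1 \<and> a1 < a \<or> 1 \<le> d1 \<and> d1 < d"
    proof -
      have "q < a \<or> q < d \<or> a = q \<and> d = q"
        using \<open>2 * q \<le> a + d\<close> by linarith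
      then show thesis
        using q_ge_2 that[of q 0] that[of 0 q] that[of "q - 1" 1] by auto
    qed
    define a2 d2 where "a2 = a - a1" and "d2 = d - d1"
    have "symm_monomial a1 0 0 d1 \<in> gen_alg G"
      using split by (intro ga_gen symm_q_in)
    moreover have "symm_monomial a2 0 0 d2 \<in> gen_alg G"
    proof (rule IH)
      show "a2 + 0 + 0 + d2 < n"
        using split deg q_ge_2 by (simp add: a2_def d2_def)
      have "torus_weight a2 0 0 d2 = torus_weight a 0 0 d - int q"
        using split by (simp add: a2_def d2_def torus_weight_def of_nat_diff)
      then show "int q dvd torus_weight a2 0 0 d2"
        using q_dvd by simp
    qed
    moreover have "symm_monomial a1 a2 d2 d1 \<in> gen_alg G"
    proof (rule symm_monomial_in_gen_alg_if_reducible[OF IH])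
      show "a1 + a2 + d2 + d1 \<le> n"
        using split deg by (simp add: a2_def d2_def)
      have "torus_weight a1 a2 d2 d1 = 2 * int q - torus_weight a 0 0 d"
        using split by (simp add: a2_def d2_def torus_weight_def of_nat_diff)
      then show "int q dvd torus_weight a1 a2 d2 d1"
        using q_dvd by simp
      show "1 \<le> a1 \<and> 1 \<le> a2 \<or> 1 \<le> d2 \<and> 1 \<le> d1"
        using cross by (auto simp: a2_def d2_def)
    qed
    moreover have "symm_monomial a 0 0 d =
        symm_monomial a1 0 0 d1 * symm_monomial a2 0 0 d2 - symm_monomial a1 a2 d2 d1"
      using split by (simp add: symm_monomial_mult a2_def d2_def)
    ultimately show ?thesis
      by (metis gen_alg_diff ga_mult)
  qed
qed

lemma symm_monomial_x1_y1_in_gen_alg: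
  assumes IH: "\<And>a' b' c' d'. a' + b' + c' + d' < n \<Longrightarrow> int q dvd torus_weight a' b' c' d' \<Longrightarrow>
      symm_monomial a' b' c' d' \<in> gen_alg G"
    and deg: "Suc a + Suc c \<le> n" and q_dvd: "int q dvd torus_weight (Suc a) 0 (Suc c) 0"
  shows "symm_monomial (Suc a) 0 (Suc c) 0 \<in> gen_alg G"
proof (cases "a = 0 \<and> c = 0")
  case True
  then show ?thesis
    using pairing_in by (simp add: ga_gen)
next
  case False
  have "symm_monomial a 0 c 0 \<in> gen_alg G"
    using deg q_dvd by (intro IH) (simp_all add: torus_weight_def)
  moreover have "symm_monomial 1 a 1 c \<in> gen_alg G"
  proof (rule symm_monomial_in_gen_alg_if_reducible[OF IH])
    show "1 + a + 1 + c \<le> n"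
      using deg by simp
    have "torus_weight 1 a 1 c = - torus_weight (Suc a) 0 (Suc c) 0"
      by (simp add: torus_weight_def)
    then show "int q dvd torus_weight 1 a 1 c"
      using q_dvd by simp
    show "1 \<le> (1::nat) \<and> 1 \<le> a \<or> 1 \<le> (1::nat) \<and> 1 \<le> c"
      using False by auto
  qed
  moreover have "symm_monomial (Suc a) 0 (Suc c) 0 =
      symm_monomial 1 0 1 0 * symm_monomial a 0 c 0 - symm_monomial 1 a 1 c"
    by (simp add: symm_monomial_mult)
  ultimately show ?thesis
    using pairing_in by (metis gen_alg_diff ga_mult ga_gen)
qed

lemma symm_monomial_in_gen_alg:
  assumes "int q dvd torus_weight a b c d"
  shows "symm_monomial a b c d \<in> gen_alg G"
  using assms
proof (induction "a + b + c + d" arbitrary: a b c d rule: less_induct)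
  case less
  note IH = less.hyps
  have b_zero: "symm_monomial a' 0 c' d' \<in> gen_alg G"
    if deg: "a' + c' + d' = a + b + c + d" and q_dvd: "int q dvd torus_weight a' 0 c' d'" for a' c' d'
  proof -
    consider "1 \<le> c' \<and> 1 \<le> d'" | "c' = 0" | "a' = 0" "d' = 0" | a'' c'' where "a' = Suc a''" "c' = Suc c''" "d' = 0"
      by (metis One_nat_def Suc_le_eq not0_implies_Suc not_gr0)
    then show ?thesis
    proof cases
      case 1
      then show ?thesis
        using deg q_dvd by (intro symm_monomial_in_gen_alg_if_reducible[OF IH]) auto
    next
      case 2
      show ?thesis
        unfolding 2 by (rule symm_monomial_x1_y2_in_gen_alg[OF IH]) (use deg q_dvd 2 in auto)
    next
      case 3
      have "symm_monomial 0 0 0 c' \<in> gen_alg G"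
        using deg q_dvd 3 torus_weight_swap[of 0 0 c' 0]
        by (intro symm_monomial_x1_y2_in_gen_alg[OF IH]) auto
      then show ?thesis
        using 3 symm_monomial_swap[of 0 0 c' 0] by metis
    next
      case 4
      then show ?thesis
        using deg q_dvd by (auto intro: symm_monomial_x1_y1_in_gen_alg[OF IH])
    qed
  qed
  consider "1 \<le> a \<and> 1 \<le> b \<or> 1 \<le> c \<and> 1 \<le> d" | "b = 0" | "a = 0"
    by linarith
  then show ?case
  proof cases
    case 1
    then show ?thesis
      using less.prems by (intro symm_monomial_in_gen_alg_if_reducible[OF IH]) auto
  next
    case 2
    show ?thesis
      unfolding 2 by (rule b_zero) (use 2 less.prems in auto)
  next
    case 3
    have "symm_monomial b 0 d c \<in> gen_alg G"
      using 3 less.prems torus_weight_swap[of 0 b c d] by (intro b_zero) auto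
    then show ?thesis
      using 3 symm_monomial_swap[of b 0 d c] by metis
  qed
qed

end

section \<open>Finite fields\<close>

lemma card_field_ge_2: "2 \<le> CARD('k::{field,finite})"
  using card_mono[of UNIV "{0::'k, 1}"] by simp

lemma power_card_minus_one:
  assumes "(c::'k::{field,finite}) \<noteq> 0"
  shows "c ^ (CARD('k) - 1) = 1"
proof -
  let ?U = "UNIV - {0::'k}"
  have "bij_betw (\<lambda>x. c * x) ?U ?U"
    unfolding bij_betw_def inj_on_def using assms
    by (auto intro!: image_eqI[of _ _ "x / c" for x])
  then have "(\<Prod>x\<in>?U. x) = (\<Prod>x\<in>?U. c * x)"
    using prod.reindex_bij_betw[of "\<lambda>x. c * x" ?U ?U "\<lambda>x. x"] by simp
  also have "\<dots> = c ^ card ?U * (\<Prod>x\<in>?U. x)"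
    by (simp add: prod.distrib)
  finally have "(\<Prod>x\<in>?U. x) = c ^ card ?U * (\<Prod>x\<in>?U. x)" .
  moreover have "(\<Prod>x\<in>?U. x) \<noteq> 0"
    by simp
  ultimately show ?thesis
    by (simp add: card_Diff_singleton)
qed

lemma power_mod_card_minus_one:
  assumes "(c::'k::{field,finite}) \<noteq> 0"
  shows "c ^ (e mod (CARD('k) - 1)) = c ^ e"
proof -
  let ?q = "CARD('k) - 1"
  have "c ^ e = c ^ (?q * (e div ?q) + e mod ?q)"
    by simp
  also have "\<dots> = (c ^ ?q) ^ (e div ?q) * c ^ (e mod ?q)"
    by (simp only: power_add power_mult)
  finally show ?thesis
    using power_card_minus_one[OF assms] by simp
qed

text \<open>\<open>X\<^sup>r\<^sup>1 - X\<^sup>r\<^sup>2\<close> with \<open>r\<^sub>i = e\<^sub>i mod (q - 1)\<close> would be a nonzero polynomial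
  of degree \<open>< q - 1\<close> with \<open>q - 1\<close> roots.\<close>
lemma cong_card_minus_one_if_powers_eq:
  assumes "\<And>c::'k::{field,finite}. c \<noteq> 0 \<Longrightarrow> c ^ e1 = c ^ e2"
  shows "[e1 = e2] (mod CARD('k) - 1)"
proof (rule ccontr)
  let ?q = "CARD('k) - 1"
  define r1 r2 where "r1 = e1 mod ?q" and "r2 = e2 mod ?q"
  assume "\<not> [e1 = e2] (mod ?q)"
  then have "r1 \<noteq> r2"
    by (simp add: cong_def r1_def r2_def)
  define p :: "'k poly" where "p = monom 1 r1 - monom 1 r2"
  have "coeff p r1 = 1"
    using \<open>r1 \<noteq> r2\<close> by (simp add: p_def coeff_monom)
  then have "p \<noteq> 0"
    by auto
  have "?q > 0"
    using card_field_ge_2[where 'k='k] by simp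
  then have "degree p < ?q"
    unfolding p_def r1_def r2_def
    by (intro le_less_trans[OF degree_diff_le_max]) (simp add: degree_monom_eq)
  have "UNIV - {0} \<subseteq> {x. poly p x = 0}"
    using assms by (auto simp: p_def poly_monom r1_def r2_def power_mod_card_minus_one simp del: One_nat_def)
  then have "card (UNIV - {0::'k}) \<le> card {x. poly p x = 0}"
    by (intro card_mono) simp_all
  also have "\<dots> \<le> degree p"
    using \<open>p \<noteq> 0\<close> by (rule card_poly_roots_bound)
  finally show False
    using \<open>degree p < ?q\<close> by (simp add: card_Diff_singleton)
qed

lemma of_nat_card_eq_0: "of_nat CARD('k::{ring_1,finite}) = (0::'k)"
proof -
  have "bij (\<lambda>x::'k. x + 1)"
    by (rule o_bij[where g = "\<lambda>x. x - 1"]) auto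
  then have "(\<Sum>x\<in>UNIV. x) = (\<Sum>x\<in>UNIV. x + (1::'k))"
    using sum.reindex_bij_betw[of "\<lambda>x. x + 1" UNIV UNIV "\<lambda>x. x"] by (simp add: eq_commute)
  also have "\<dots> = (\<Sum>x\<in>UNIV. x) + of_nat CARD('k)"
    by (simp add: sum.distrib)
  finally show ?thesis
    by simp
qed

lemma two_neq_zero_if_odd_card:
  assumes "odd CARD('k::{field,finite})"
  shows "(2::'k) \<noteq> 0"
proof
  assume "(2::'k) = 0"
  obtain k where "CARD('k) = 2 * k + 1"
    using assms oddE by blast
  then have "(0::'k) = 2 * of_nat k + 1"
    using of_nat_card_eq_0[where 'k='k] by (simp add: add.commute)
  then show False
    using \<open>(2::'k) = 0\<close> by simp
qed

section \<open>The group \<open>O\<^sub>2\<^sup>+\<close>\<close>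

definition diag_antidiag :: "'k::field mat2 set" where
  "diag_antidiag = {(c, 0, 0, inverse c) | c. c \<noteq> 0} \<union> {(0, c, inverse c, 0) | c. c \<noteq> 0}"

lemma m2mult_O2_gens_diag_antidiag:
  assumes "s \<in> O2_gens" and "g \<in> (diag_antidiag :: 'k::field mat2 set)"
  shows "m2mult s g \<in> diag_antidiag"
  using assms unfolding O2_gens_def diag_antidiag_def by auto

lemma m2inv_O2_gens: "s \<in> (O2_gens :: 'k::field mat2 set) \<Longrightarrow> m2inv s \<in> O2_gens"
  unfolding O2_gens_def by auto

lemma O2plus_subset_diag_antidiag: "(O2plus :: 'k::field mat2 set) \<subseteq> diag_antidiag"
proof
  fix g :: "'k mat2"
  assume "g \<in> O2plus"
  then show "g \<in> diag_antidiag"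
    unfolding O2plus_def
  proof (induct rule: gen_group.induct)
    case gg_id
    show ?case
      unfolding diag_antidiag_def m2id_def by (auto intro!: exI[of _ 1])
  qed (auto intro: m2mult_O2_gens_diag_antidiag m2inv_O2_gens)
qed

lemma O2_gens_subset_O2plus: "(O2_gens :: 'k::field mat2 set) \<subseteq> O2plus"
proof
  fix s :: "'k mat2"
  assume "s \<in> O2_gens"
  then have "m2mult s m2id \<in> O2plus"
    unfolding O2plus_def by (intro gg_mult gg_id)
  then show "s \<in> O2plus"
    by (cases s) (simp add: m2id_def)
qed

lemma act_add: "act g (P + Q) = act g P + act g Q"
  by (simp add: act_def subst_add)

lemma act_sum: "act g (\<Sum>i\<in>I. f i) = (\<Sum>i\<in>I. act g (f i))"
  by (simp add: act_def subst_sum)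

lemma act_mult: "act g (P * Q) = act g P * act g Q"
  by (simp add: act_def subst_mult)

lemma act_Const: "act g (Const c) = Const c"
  by (simp add: act_def subst_Const)

lemma act_Var: "act g (Var v) = act_subst g v"
  by (simp add: act_def subst_Var)

lemma act_power: "act g (P ^ n) = act g P ^ n"
  by (simp add: act_def subst_power)

lemma act_monomial4:
  "act g (monomial4 a b c d) = act_subst g X1 ^ a * act_subst g X2 ^ b * act_subst g Y1 ^ c * act_subst g Y2 ^ d"
  by (simp add: monomial4_def act_mult act_power act_Var)

lemma act_diag_monomial4:
  assumes "(t::'k::field) \<noteq> 0"
  shows "act (t, 0, 0, inverse t) (monomial4 a b c d) =
    Const (t ^ (a + d) * inverse t ^ (b + c)) * monomial4 a b c d"
  using assms unfolding act_monomial4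
  by (simp add: monomial4_def power_mult_distrib power_add Const_mult Const_power ac_simps)

lemma act_antidiag_monomial4:
  assumes "(t::'k::field) \<noteq> 0"
  shows "act (0, t, inverse t, 0) (monomial4 a b c d) =
    Const (t ^ (a + d) * inverse t ^ (b + c)) * monomial4 b a d c"
  using assms unfolding act_monomial4
  by (simp add: monomial4_def power_mult_distrib power_add Const_mult Const_power ac_simps)

lemma act_xi_monomial4: "act (0, 1, 1, 0) (monomial4 a b c d) = (monomial4 b a d c :: 'k::field mpoly4)"
  using act_antidiag_monomial4[of "1::'k" a b c d] by simp

section \<open>The invariant ring\<close>

definition invariant_gens :: "'k::{field,finite} mpoly4 set" where
  "invariant_gens = {monomial4 1 1 0 0, monomial4 0 0 1 1, symm_monomial 1 0 1 0} \<union>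
     {symm_monomial (CARD('k) - 1 - i) 0 0 i | i. i \<le> CARD('k) - 1}"

lemma act_symm_monomial_if_powers_eq:
  fixes g :: "'k::field mat2"
  assumes "g \<in> diag_antidiag" and "\<And>t::'k. t \<noteq> 0 \<Longrightarrow> t ^ (a + d) = t ^ (b + c)"
  shows "act g (symm_monomial a b c d) = symm_monomial a b c d"
proof -
  obtain t where "t \<noteq> 0" and g: "g = (t, 0, 0, inverse t) \<or> g = (0, t, inverse t, 0)"
    using assms(1) unfolding diag_antidiag_def by blast
  then have "t ^ (a + d) * inverse t ^ (b + c) = 1" "t ^ (b + c) * inverse t ^ (a + d) = 1"
    using assms(2)[OF \<open>t \<noteq> 0\<close>] by (simp_all add: power_inverse)
  with g \<open>t \<noteq> 0\<close> show ?thesis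
    by (auto simp: symm_monomial_def act_add act_diag_monomial4 act_antidiag_monomial4)
qed

lemma act_monomial4_balanced:
  assumes "g \<in> (diag_antidiag :: 'k::field mat2 set)"
  shows "act g (monomial4 a a c c) = monomial4 a a c c"
proof -
  obtain t :: 'k where "t \<noteq> 0" and g: "g = (t, 0, 0, inverse t) \<or> g = (0, t, inverse t, 0)"
    using assms unfolding diag_antidiag_def by blast
  then have "t ^ (a + c) * inverse t ^ (a + c) = 1"
    by (simp add: power_inverse)
  with g \<open>t \<noteq> 0\<close> show ?thesis
    by (auto simp: act_diag_monomial4 act_antidiag_monomial4 add.commute)
qed

lemma act_invariant_gens:
  fixes g :: "'k::{field,finite} mat2"
  assumes "g \<in> diag_antidiag" and "f \<in> invariant_gens"
  shows "act g f = f"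
proof -
  have "act g (symm_monomial (CARD('k) - 1 - i) 0 0 i) = symm_monomial (CARD('k) - 1 - i) 0 0 i"
    if "i \<le> CARD('k) - 1" for i
  proof (rule act_symm_monomial_if_powers_eq[OF assms(1)])
    have "CARD('k) - 1 - i + i = CARD('k) - 1"
      using that by simp
    then show "t ^ (CARD('k) - 1 - i + i) = t ^ (0 + 0)" if "t \<noteq> 0" for t :: 'k
      using power_card_minus_one[OF that] by simp
  qed
  moreover have "act g (symm_monomial 1 0 1 0) = symm_monomial 1 0 1 0"
    by (intro act_symm_monomial_if_powers_eq[OF assms(1)]) simp
  ultimately show ?thesis
    using assms act_monomial4_balanced[OF assms(1)] unfolding invariant_gens_def by auto
qed

lemma act_gen_alg_invariant_gens:
  assumes "g \<in> diag_antidiag"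
  shows "P \<in> gen_alg invariant_gens \<Longrightarrow> act g P = P"
  by (induct rule: gen_alg.induct) (simp_all add: act_Const act_invariant_gens[OF assms] act_add act_mult)

lemma act_diag_single:
  assumes "(t::'k::field) \<noteq> 0"
  shows "act (t, 0, 0, inverse t) (Poly_Mapping.single m a) = Poly_Mapping.single m (a *
    (t ^ (Poly_Mapping.lookup m X1 + Poly_Mapping.lookup m Y2) *
     inverse t ^ (Poly_Mapping.lookup m X2 + Poly_Mapping.lookup m Y1)))"
    (is "_ = Poly_Mapping.single m (a * ?s)")
proof -
  let ?mon = "monomial4 (Poly_Mapping.lookup m X1) (Poly_Mapping.lookup m X2)
    (Poly_Mapping.lookup m Y1) (Poly_Mapping.lookup m Y2)"
  have "act (t, 0, 0, inverse t) (Poly_Mapping.single m a) = act (t, 0, 0, inverse t) (Const a * ?mon)"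
    by (simp add: Const_mult_single flip: single_eq_monomial4)
  also have "\<dots> = Const (a * ?s) * ?mon"
    by (simp add: assms act_mult act_Const act_diag_monomial4 Const_mult mult.assoc)
  also have "\<dots> = Poly_Mapping.single m (a * ?s)"
    by (simp add: Const_mult_single flip: single_eq_monomial4)
  finally show ?thesis .
qed

lemma lookup_act_diag:
  assumes "(t::'k::field) \<noteq> 0"
  shows "Poly_Mapping.lookup (act (t, 0, 0, inverse t) P) m = Poly_Mapping.lookup P m *
    (t ^ (Poly_Mapping.lookup m X1 + Poly_Mapping.lookup m Y2) *
     inverse t ^ (Poly_Mapping.lookup m X2 + Poly_Mapping.lookup m Y1))"
proof -
  have "act (t, 0, 0, inverse t) P =
      (\<Sum>n\<in>Poly_Mapping.keys P. Poly_Mapping.single n (Poly_Mapping.lookup P n *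
        (t ^ (Poly_Mapping.lookup n X1 + Poly_Mapping.lookup n Y2) *
         inverse t ^ (Poly_Mapping.lookup n X2 + Poly_Mapping.lookup n Y1))))"
    by (subst (1) poly_mapping_sum_single[of P, symmetric]) (simp add: assms act_sum act_diag_single)
  then show ?thesis
    by (cases "m \<in> Poly_Mapping.keys P") (simp_all add: lookup_sum lookup_single when_def in_keys_iff)
qed

lemma torus_weight_dvd_if_diag_invariant:
  fixes P :: "'k::{field,finite} mpoly4"
  assumes "\<And>t. t \<noteq> 0 \<Longrightarrow> act (t, 0, 0, inverse t) P = P" and "m \<in> Poly_Mapping.keys P"
  shows "int (CARD('k) - 1) dvd torus_weight (Poly_Mapping.lookup m X1) (Poly_Mapping.lookup m X2)
    (Poly_Mapping.lookup m Y1) (Poly_Mapping.lookup m Y2)"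
proof -
  let ?e1 = "Poly_Mapping.lookup m X1 + Poly_Mapping.lookup m Y2"
  let ?e2 = "Poly_Mapping.lookup m X2 + Poly_Mapping.lookup m Y1"
  have "t ^ ?e1 = t ^ ?e2" if "t \<noteq> 0" for t :: 'k
  proof -
    have "Poly_Mapping.lookup P m * (t ^ ?e1 * inverse t ^ ?e2) = Poly_Mapping.lookup P m"
      using lookup_act_diag[OF that, of P m] assms(1)[OF that] by simp
    then show ?thesis
      using assms(2) that by (simp add: in_keys_iff power_inverse field_simps)
  qed
  then have "[?e1 = ?e2] (mod CARD('k) - 1)"
    by (rule cong_card_minus_one_if_powers_eq)
  then show ?thesis
    by (simp add: torus_weight_def cong_iff_dvd_diff algebra_simps flip: cong_int_iff)
qed

lemma symm_monomial_in_gen_alg_invariant_gens: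
  assumes "odd CARD('k::{field,finite})" and "int (CARD('k) - 1) dvd torus_weight a b c d"
  shows "symm_monomial a b c d \<in> gen_alg (invariant_gens :: 'k mpoly4 set)"
proof (rule symm_monomial_in_gen_alg[OF _ _ _ _ _ assms(2)])
  show "2 \<le> CARD('k) - 1"
    using card_field_ge_2[where 'k='k] assms(1) by (cases "CARD('k) = 2") auto
  show "Var X1 * Var X2 \<in> (invariant_gens :: 'k mpoly4 set)"
    by (simp add: invariant_gens_def monomial4_def)
  show "Var Y1 * Var Y2 \<in> (invariant_gens :: 'k mpoly4 set)"
    by (simp add: invariant_gens_def monomial4_def)
  show "symm_monomial 1 0 1 0 \<in> (invariant_gens :: 'k mpoly4 set)"
    by (simp add: invariant_gens_def)
  show "symm_monomial a 0 0 d \<in> (invariant_gens :: 'k mpoly4 set)" if "a + d = CARD('k) - 1" for a d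
  proof -
    have "a = CARD('k) - 1 - d" and "d \<le> CARD('k) - 1"
      using that by simp_all
    then show ?thesis
      unfolding invariant_gens_def by blast
  qed
qed

lemma diag_xi_invariant_in_gen_alg:
  fixes P :: "'k::{field,finite} mpoly4"
  assumes "odd CARD('k)"
    and xi: "act (0, 1, 1, 0) P = P" and diag: "\<And>t. t \<noteq> 0 \<Longrightarrow> act (t, 0, 0, inverse t) P = P"
  shows "P \<in> gen_alg invariant_gens"
proof -
  have symm_in: "symm_monomial a b c d \<in> gen_alg (invariant_gens :: 'k mpoly4 set)"
    if "int (CARD('k) - 1) dvd torus_weight a b c d" for a b c d
    using assms(1) that by (rule symm_monomial_in_gen_alg_invariant_gens)
  have "Const 2 * P = P + act (0, 1, 1, 0) P"
    unfolding xi Const_numeral by (rule mult_2)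
  also have "\<dots> = (\<Sum>m\<in>Poly_Mapping.keys P. Const (Poly_Mapping.lookup P m) *
      symm_monomial (Poly_Mapping.lookup m X1) (Poly_Mapping.lookup m X2)
        (Poly_Mapping.lookup m Y1) (Poly_Mapping.lookup m Y2))"
    by (subst (1 2) mpoly4_expansion[of P])
      (simp add: act_sum act_mult act_Const act_xi_monomial4 symm_monomial_def distrib_left sum.distrib)
  also have "\<dots> \<in> gen_alg invariant_gens"
    by (intro gen_alg_sum ga_mult[OF ga_const] symm_in torus_weight_dvd_if_diag_invariant[OF diag])
  finally have "Const (inverse 2) * (Const 2 * P) \<in> gen_alg invariant_gens"
    by (rule ga_mult[OF ga_const])
  moreover have "inverse 2 * (2::'k) = 1"
    using two_neq_zero_if_odd_card[OF assms(1)] by simp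
  then have "Const (inverse 2) * (Const 2 * P) = P"
    by (simp only: mult.assoc[symmetric] Const_mult[symmetric] Const_1 mult_1_left)
  ultimately show ?thesis
    by simp
qed

theorem theorem1p2:
  assumes "prime CARD('k::{field,finite})" and "odd CARD('k)"
  shows "{P :: 'k mpoly4. \<forall>g\<in>O2plus. act g P = P} =
         gen_alg ({Var X1 * Var X2, Var Y1 * Var Y2, Var X1 * Var Y1 + Var X2 * Var Y2} \<union>
                  {Var X1 ^ (CARD('k) - 1 - i) * Var Y2 ^ i + Var X2 ^ (CARD('k) - 1 - i) * Var Y1 ^ i
                   | i. i \<le> CARD('k) - 1})"
proof -
  have gens: "{Var X1 * Var X2, Var Y1 * Var Y2, Var X1 * Var Y1 + Var X2 * Var Y2} \<union>
      {Var X1 ^ (CARD('k) - 1 - i) * Var Y2 ^ i + Var X2 ^ (CARD('k) - 1 - i) * Var Y1 ^ i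
       | i. i \<le> CARD('k) - 1} = (invariant_gens :: 'k mpoly4 set)"
    by (simp add: invariant_gens_def symm_monomial_def monomial4_def)
  have "P \<in> gen_alg invariant_gens" if "\<forall>g\<in>O2plus. act g P = P" for P :: "'k mpoly4"
  proof (rule diag_xi_invariant_in_gen_alg[OF assms(2)])
    show "act (0, 1, 1, 0) P = P"
      using that O2_gens_subset_O2plus by (auto simp: O2_gens_def)
    show "act (t, 0, 0, inverse t) P = P" if "t \<noteq> 0" for t
      using \<open>\<forall>g\<in>O2plus. act g P = P\<close> O2_gens_subset_O2plus \<open>t \<noteq> 0\<close> by (auto simp: O2_gens_def)
  qed
  moreover have "act g P = P" if "g \<in> O2plus" and "P \<in> gen_alg invariant_gens" for g P
    using that O2plus_subset_diag_antidiag act_gen_alg_invariant_gens by blast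
  ultimately show ?thesis
    unfolding gens by blast
qed

end
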